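(* For any probability measures $\mu,\mu_1,\mu_2$ on $\mathbb{R}^n,\mathbb{R}^{n_1},\mathbb{R}^{n_2}$ satisfying $\mathrm{IC}(\beta)$, $\mathrm{IC}(\beta_1)$, $\mathrm{IC}(\beta_2)$ respectively: 1. If $L$ is an affine map, then $L_{\#}\mu$ satisfies $\mathrm{IC}(\beta)$. 2. The product $\mu_1\otimes\mu_2$ satisfies $\mathrm{IC}(\beta_1\vee\beta_2)$. 3. If $n_1=n_2$, then the convolution $\mu_1*\mu_2$ satisfies $\mathrm{IC}(\beta_1\vee\beta_2)$. 4. The symmetrization $\overline{\mu}$ satisfies $\mathrm{IC}(\beta)$.
   Context: $T_{\#}\mu(A)=\mu(T^{-1}(A))$ is the push-forward; $x\vee y=\max\{x,y\}$. A pair $(\mu,W)$, with $\mu$ a probability measure on $\mathbb{R}^n$ and $W:\mathbb{R}^n\to[0,\infty]$, satisfies property $(\tau)$ if for every bounded function $f$, $\int e^{h}\,d\mu\int e^{-f}\,d\mu\le 1$, where $h(x)=\inf_{y}\{W(x-y)+f(y)\}$ is the infimum convolution of $W$ and $f$. For a measure $\mu$, $\mu'$ is its reflection through the origin, $\overline{\mu}=\mu*\mu'$, $\Lambda_\mu=\ln\int e^{\langle \cdot,y\rangle}d\mu(y)$, and $\Lambda^*_\mu(x)=\sup_y\{\langle x,y\rangle-\Lambda_\mu(y)\}$. A probability measure $\mu$ satisfies $\mathrm{IC}(\beta)$ ($\beta>0$) if the pair $(\mu,\Lambda^*_{\overline{\mu}}(\cdot/\beta))$ satisfies property $(\tau)$.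 *)

theory Defs
  imports "HOL-Probability.Probability"
begin

definition exp_ereal :: "ereal \<Rightarrow> ennreal" where
  "exp_ereal x = (case x of ereal r \<Rightarrow> ennreal (exp r) | PInfty \<Rightarrow> \<infinity> | MInfty \<Rightarrow> 0)"

definition ln_ennreal :: "ennreal \<Rightarrow> ereal" where
  "ln_ennreal x = (if x = \<infinity> then \<infinity> else if x = 0 then -\<infinity> else ereal (ln (enn2real x)))"

definition inf_conv :: "('a::real_vector \<Rightarrow> ereal) \<Rightarrow> ('a \<Rightarrow> real) \<Rightarrow> 'a \<Rightarrow> ereal" where
  "inf_conv W f x = (INF y. W (x - y) + ereal (f y))"

definition property_tau :: "'a::euclidean_space measure \<Rightarrow> ('a \<Rightarrow> ereal) \<Rightarrow> bool" where
  "property_tau M W \<longleftrightarrow>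
     (\<forall>f. f \<in> borel_measurable borel \<longrightarrow> bounded (range f) \<longrightarrow>
        (\<integral>\<^sup>+ x. exp_ereal (inf_conv W f x) \<partial>M) * (\<integral>\<^sup>+ x. ennreal (exp (- f x)) \<partial>M) \<le> 1)"

definition reflect :: "'a::euclidean_space measure \<Rightarrow> 'a measure" where
  "reflect M = distr M borel uminus"

definition conv :: "'a::euclidean_space measure \<Rightarrow> 'a measure \<Rightarrow> 'a measure" where
  "conv M N = distr (M \<Otimes>\<^sub>M N) borel (\<lambda>(x, y). x + y)"

definition symmetrization :: "'a::euclidean_space measure \<Rightarrow> 'a measure" where
  "symmetrization M = conv M (reflect M)"

definition log_laplace :: "'a::euclidean_space measure \<Rightarrow> 'a \<Rightarrow> ereal" where
  "log_laplace M y = ln_ennreal (\<integral>\<^sup>+ x. ennreal (exp (y \<bullet> x)) \<partial>M)"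

definition legendre_log_laplace :: "'a::euclidean_space measure \<Rightarrow> 'a \<Rightarrow> ereal" where
  "legendre_log_laplace M x = (SUP y. ereal (x \<bullet> y) - log_laplace M y)"

definition IC :: "real \<Rightarrow> 'a::euclidean_space measure \<Rightarrow> bool" where
  "IC \<beta> M \<longleftrightarrow> property_tau M (\<lambda>x. legendre_log_laplace (symmetrization M) (x /\<^sub>R \<beta>))"

definition is_prob_on_borel :: "'a::euclidean_space measure \<Rightarrow> bool" where
  "is_prob_on_borel M \<longleftrightarrow> prob_space M \<and> sets M = sets borel"

end

theory Submission
  imports Defs
begin

(* Property (tau) for (mu, W) survives push-forward by a map T when the new cost satisfies
   W'(T x - T z) <= W(x - z), and passes to products when the product cost is dominated by
   W1(a) + W2(b). The costs Lambda*_{bar mu}(./beta) meet both conditions: the Laplace transform of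
   the symmetrization transforms through the adjoint under affine maps and factorizes over
   products. Being even, it satisfies L(t y) <= L(y) for 0 <= t <= 1, so the cost decreases in beta
   and both factors of a product can be given the larger constant max beta1 beta2. Convolution is
   the push-forward of the product under addition, and the symmetrization is the convolution with
   the reflection. *)

subsection \<open>Integrals of non-measurable functions\<close>

lemma nn_integral_measurable_minorant:
  obtains G where "G \<in> borel_measurable M" "\<And>x. G x \<le> f x" "integral\<^sup>N M G = integral\<^sup>N M f"
proof -
  let ?A = "{g. simple_function M g \<and> g \<le> f}"
  have "(\<lambda>_. 0) \<in> ?A" by (auto simp: le_fun_def)
  then have "integral\<^sup>S M ` ?A \<noteq> {}" by blast
  from ennreal_Sup_countable_SUP[OF this] obtain s :: "nat \<Rightarrow> ennreal"
    where s: "range s \<subseteq> integral\<^sup>S M ` ?A" "Sup (integral\<^sup>S M ` ?A) = (SUP i. s i)"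
    by blast
  have "\<exists>g. g \<in> ?A \<and> integral\<^sup>S M g = s i" for i
    using s(1) by (metis (no_types, lifting) imageE rangeI subsetD)
  then obtain g where g: "\<And>i. g i \<in> ?A" "\<And>i. integral\<^sup>S M (g i) = s i" by metis
  define G where "G x = (SUP i. g i x)" for x
  have [measurable]: "g i \<in> borel_measurable M" for i
    using g(1) by (auto intro: borel_measurable_simple_function)
  have "G \<in> borel_measurable M" unfolding G_def by measurable
  moreover have G_le: "G x \<le> f x" for x
    unfolding G_def using g(1) by (auto simp: le_fun_def intro!: SUP_least)
  moreover have "integral\<^sup>N M f \<le> integral\<^sup>N M G"
  proof -
    have "integral\<^sup>N M f = (SUP i. s i)" unfolding nn_integral_def using s(2) by simp
    also have "\<dots> \<le> integral\<^sup>N M G"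
    proof (rule SUP_least)
      fix i
      have "s i = integral\<^sup>N M (g i)" using g by (simp add: nn_integral_eq_simple_integral)
      also have "\<dots> \<le> integral\<^sup>N M G" unfolding G_def by (intro nn_integral_mono) (auto intro: SUP_upper)
      finally show "s i \<le> integral\<^sup>N M G" .
    qed
    finally show ?thesis .
  qed
  moreover have "integral\<^sup>N M G \<le> integral\<^sup>N M f" using G_le by (intro nn_integral_mono)
  ultimately show ?thesis by (intro that) auto
qed

lemma nn_integral_distr_le:
  assumes T: "T \<in> measurable M N"
  shows "integral\<^sup>N (distr M N T) g \<le> (\<integral>\<^sup>+x. g (T x) \<partial>M)"
proof -
  obtain G where G: "G \<in> borel_measurable (distr M N T)" "\<And>x. G x \<le> g x"
    "integral\<^sup>N (distr M N T) G = integral\<^sup>N (distr M N T) g"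
    using nn_integral_measurable_minorant[of "distr M N T" g] by auto
  have "integral\<^sup>N (distr M N T) g = (\<integral>\<^sup>+x. G (T x) \<partial>M)"
    using G(3) nn_integral_distr[OF T G(1)] by simp
  also have "\<dots> \<le> (\<integral>\<^sup>+x. g (T x) \<partial>M)" using G(2) by (intro nn_integral_mono)
  finally show ?thesis .
qed

lemma (in sigma_finite_measure) nn_integral_fst_le:
  "integral\<^sup>N (N \<Otimes>\<^sub>M M) g \<le> (\<integral>\<^sup>+x. \<integral>\<^sup>+y. g (x, y) \<partial>M \<partial>N)"
proof -
  obtain G where G: "G \<in> borel_measurable (N \<Otimes>\<^sub>M M)" "\<And>z. G z \<le> g z"
    "integral\<^sup>N (N \<Otimes>\<^sub>M M) G = integral\<^sup>N (N \<Otimes>\<^sub>M M) g"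
    using nn_integral_measurable_minorant by blast
  have "integral\<^sup>N (N \<Otimes>\<^sub>M M) g = (\<integral>\<^sup>+x. \<integral>\<^sup>+y. G (x, y) \<partial>M \<partial>N)"
    using G(3) nn_integral_fst[OF G(1)] by simp
  also have "\<dots> \<le> (\<integral>\<^sup>+x. \<integral>\<^sup>+y. g (x, y) \<partial>M \<partial>N)"
    using G(2) by (intro nn_integral_mono)
  finally show ?thesis .
qed

lemma nn_integral_cmult_le:
  assumes "c < \<top>"
  shows "(\<integral>\<^sup>+x. c * g x \<partial>M) \<le> c * integral\<^sup>N M g"
proof (cases "c = 0")
  case False
  obtain G where G: "G \<in> borel_measurable M" "\<And>x. G x \<le> c * g x"
    "integral\<^sup>N M G = (\<integral>\<^sup>+x. c * g x \<partial>M)"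
    using nn_integral_measurable_minorant[of M "\<lambda>x. c * g x"] by blast
  have "G x = c * (G x / c)" for x
    using False assms by (metis arithmetic_simps(78) ennreal_divide_self ennreal_divide_times)
  then have "(\<integral>\<^sup>+x. c * g x \<partial>M) = (\<integral>\<^sup>+x. c * (G x / c) \<partial>M)"
    using G(3) by (metis (no_types, lifting) nn_integral_cong)
  also have "\<dots> = c * (\<integral>\<^sup>+x. G x / c \<partial>M)"
    using G(1) by (intro nn_integral_cmult) auto
  also have "\<dots> \<le> c * integral\<^sup>N M g"
  proof (intro mult_left_mono nn_integral_mono)
    show "G x / c \<le> g x" for x
      using G(2)[of x] False assms divide_le_posI_ennreal zero_order(5) by blast
  qed simp
  finally show ?thesis .
qed simp

lemma exp_ereal_mono: "a \<le> b \<Longrightarrow> exp_ereal a \<le> exp_ereal b"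
  by (cases a; cases b) (auto simp: exp_ereal_def ennreal_leI)

lemma exp_ereal_add:
  "a \<ge> 0 \<Longrightarrow> b \<noteq> -\<infinity> \<Longrightarrow> exp_ereal (a + b) = exp_ereal a * exp_ereal b"
  by (cases a; cases b) (auto simp: exp_ereal_def exp_add ennreal_mult ennreal_top_mult)

lemma le_exp_ereal_INF:
  assumes le: "\<And>y. I \<le> exp_ereal (a y)" and bounded_below: "\<And>y. ereal m \<le> a y"
  shows "I \<le> exp_ereal (INF y. a y)"
proof (cases "INF y. a y")
  case MInf
  moreover have "ereal m \<le> (INF y. a y)" using bounded_below by (rule INF_greatest)
  ultimately show ?thesis by simp
next
  case (real r)
  have "I \<le> ennreal (exp r) + ennreal e" if "0 < e" for e
  proof -
    define d where "d = ln (1 + e / exp r)"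
    have "0 < d" using \<open>0 < e\<close> by (simp add: d_def ln_gt_zero)
    then have "(INF y. a y) < ereal (r + d)" using real by simp
    then obtain y where y: "a y < ereal (r + d)" by (auto simp: INF_less_iff)
    have "I \<le> exp_ereal (ereal (r + d))"
      using le[of y] exp_ereal_mono[of "a y"] y by (meson order.strict_implies_order order_trans)
    also have "\<dots> = ennreal (exp r * (1 + e / exp r))"
      using \<open>0 < e\<close> by (simp add: exp_ereal_def d_def exp_add add_pos_pos)
    also have "exp r * (1 + e / exp r) = exp r + e" by (simp add: field_simps)
    finally show ?thesis using \<open>0 < e\<close> by (simp add: ennreal_plus)
  qed
  then have "I \<le> ennreal (exp r)" by (rule ennreal_le_epsilon) auto
  then show ?thesis using real by (simp add: exp_ereal_def)
qed (simp add: exp_ereal_def)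

lemma ln_ennreal_mult:
  assumes "a \<noteq> 0" "b \<noteq> 0"
  shows "ln_ennreal (a * b) = ln_ennreal a + ln_ennreal b"
proof (cases "a = \<top> \<or> b = \<top>")
  case True
  then show ?thesis using assms by (auto simp: ln_ennreal_def ennreal_mult_eq_top_iff)
next
  case False
  then have "enn2real a > 0" "enn2real b > 0"
    using assms by (auto simp: enn2real_positive_iff top.not_eq_extremum zero_less_iff_neq_zero)
  then show ?thesis using False assms
    by (auto simp: ln_ennreal_def enn2real_mult ln_mult ennreal_mult_eq_top_iff)
qed

lemma ln_ennreal_mono:
  assumes "a \<noteq> 0" "a \<le> b" shows "ln_ennreal a \<le> ln_ennreal b"
proof (cases "b = \<top>")
  case False
  then have "a \<noteq> \<top>" using assms top_unique by auto
  then have "enn2real a > 0" "enn2real a \<le> enn2real b"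
    using assms False by (auto simp: enn2real_positive_iff top.not_eq_extremum zero_less_iff_neq_zero
        intro: enn2real_mono)
  then show ?thesis using False assms \<open>a \<noteq> \<top>\<close> by (auto simp: ln_ennreal_def)
qed (simp add: ln_ennreal_def)

lemma le_ereal_add_INF:
  assumes "\<And>y. (x::ereal) \<le> ereal w + T y" shows "x \<le> ereal w + (INF y. T y)"
proof -
  have "x - ereal w \<le> T y" for y
    using assms[of y] by (cases x; cases "T y") auto
  then have "x - ereal w \<le> (INF y. T y)" by (rule INF_greatest)
  then show ?thesis by (cases x; cases "INF y. T y") auto
qed

lemma ereal_diff_add_le:
  "(a::ereal) \<noteq> -\<infinity> \<Longrightarrow> b \<noteq> -\<infinity> \<Longrightarrow> ereal (p + q) - (a + b) \<le> (ereal p - a) + (ereal q - b)"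
  by (cases a; cases b) auto

lemma is_prob_on_borelD: "is_prob_on_borel M \<Longrightarrow> prob_space M"
  "is_prob_on_borel M \<Longrightarrow> sets M = sets borel"
  by (auto simp: is_prob_on_borel_def)

lemma measurable_is_prob_on_borelI:
  "is_prob_on_borel M \<Longrightarrow> f \<in> measurable borel N \<Longrightarrow> f \<in> measurable M N"
  by (metis is_prob_on_borelD(2) measurable_cong_sets)

lemma is_prob_on_borel_sigma_finite: "is_prob_on_borel M \<Longrightarrow> sigma_finite_measure M"
  using is_prob_on_borelD(1) prob_space_imp_sigma_finite by blast

lemma is_prob_on_borel_pair:
  assumes "is_prob_on_borel M1" "is_prob_on_borel M2"
  shows "is_prob_on_borel (M1 \<Otimes>\<^sub>M M2)"
proof -
  have "sets (M1 \<Otimes>\<^sub>M M2) = sets (borel \<Otimes>\<^sub>M borel)"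
    using assms by (intro sets_pair_measure_cong) (auto dest: is_prob_on_borelD)
  then have "sets (M1 \<Otimes>\<^sub>M M2) = sets borel" by (metis borel_prod)
  then show ?thesis
    using prob_space_pair assms by (auto simp: is_prob_on_borel_def)
qed

lemma is_prob_on_borel_distr:
  assumes "is_prob_on_borel M" "f \<in> borel_measurable borel"
  shows "is_prob_on_borel (distr M borel f)"
proof -
  have "f \<in> borel_measurable M" using assms measurable_is_prob_on_borelI by blast
  then show ?thesis using prob_space.prob_space_distr[OF is_prob_on_borelD(1)[OF assms(1)], of f borel]
    by (simp add: is_prob_on_borel_def)
qed

lemma is_prob_on_borel_reflect: "is_prob_on_borel M \<Longrightarrow> is_prob_on_borel (reflect M)"
  unfolding reflect_def by (rule is_prob_on_borel_distr) auto

lemma borel_measurable_add_split [measurable]: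
  "(\<lambda>(x, y). x + y :: 'a::euclidean_space) \<in> borel_measurable borel"
  unfolding case_prod_beta by (intro borel_measurable_continuous_onI continuous_intros)

lemma is_prob_on_borel_conv:
  "is_prob_on_borel M \<Longrightarrow> is_prob_on_borel N \<Longrightarrow> is_prob_on_borel (conv M N)"
  unfolding conv_def by (intro is_prob_on_borel_distr is_prob_on_borel_pair borel_measurable_add_split)

lemma is_prob_on_borel_symmetrization:
  "is_prob_on_borel M \<Longrightarrow> is_prob_on_borel (symmetrization M)"
  unfolding symmetrization_def by (intro is_prob_on_borel_conv is_prob_on_borel_reflect)

lemma borel_measurable_affine:
  fixes A :: "'a::euclidean_space \<Rightarrow> 'b::euclidean_space"
  assumes "linear A" shows "(\<lambda>x. A x + c) \<in> borel_measurable borel"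
proof -
  have "bounded_linear A" using assms by (simp add: linear_conv_bounded_linear)
  then show ?thesis by (intro borel_measurable_continuous_onI continuous_intros linear_continuous_on)
qed

subsection \<open>The Laplace transform\<close>

definition laplace :: "'a::euclidean_space measure \<Rightarrow> 'a \<Rightarrow> ennreal" where
  "laplace M y = (\<integral>\<^sup>+x. ennreal (exp (y \<bullet> x)) \<partial>M)"

lemma log_laplace_eq_ln_laplace: "log_laplace M y = ln_ennreal (laplace M y)"
  by (simp add: log_laplace_def laplace_def)

lemma borel_measurable_exp_inner [measurable]:
  "(\<lambda>x. ennreal (exp (y \<bullet> x))) \<in> borel_measurable borel"
proof -
  have "(\<lambda>x. exp (y \<bullet> x)) \<in> borel_measurable borel"
    by (intro borel_measurable_continuous_onI continuous_intros)
  then show ?thesis by measurable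
qed

lemma laplace_nonzero:
  assumes "is_prob_on_borel M" shows "laplace M y \<noteq> 0"
proof
  assume "laplace M y = 0"
  then have "AE x in M. ennreal (exp (y \<bullet> x)) = 0"
    unfolding laplace_def using assms
    by (subst (asm) nn_integral_0_iff_AE) (auto intro: measurable_is_prob_on_borelI)
  then show False using prob_space.AE_False[OF is_prob_on_borelD(1)[OF assms]] by simp
qed

lemma laplace_zero: "is_prob_on_borel M \<Longrightarrow> laplace M 0 = 1"
  by (simp add: laplace_def prob_space.emeasure_space_1 is_prob_on_borelD(1))

lemma laplace_distr:
  assumes "is_prob_on_borel M" "T \<in> borel_measurable borel"
  shows "laplace (distr M borel T) y = (\<integral>\<^sup>+x. ennreal (exp (y \<bullet> T x)) \<partial>M)"
  unfolding laplace_def using assms by (subst nn_integral_distr) (auto intro: measurable_is_prob_on_borelI)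

lemma laplace_pair:
  assumes "is_prob_on_borel M1" "is_prob_on_borel M2"
  shows "laplace (M1 \<Otimes>\<^sub>M M2) (y1, y2) = laplace M1 y1 * laplace M2 y2"
proof -
  have exp1 [measurable]: "(\<lambda>x. ennreal (exp (y \<bullet> x))) \<in> borel_measurable M1"
      and exp2 [measurable]: "(\<lambda>x. ennreal (exp (y' \<bullet> x))) \<in> borel_measurable M2" for y y'
    using assms by (auto intro: measurable_is_prob_on_borelI)
  have "laplace (M1 \<Otimes>\<^sub>M M2) (y1, y2)
      = (\<integral>\<^sup>+z. ennreal (exp (y1 \<bullet> fst z)) * ennreal (exp (y2 \<bullet> snd z)) \<partial>(M1 \<Otimes>\<^sub>M M2))"
    unfolding laplace_def by (auto simp: exp_add ennreal_mult intro!: nn_integral_cong)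
  also have "\<dots> = (\<integral>\<^sup>+x. \<integral>\<^sup>+x'. ennreal (exp (y1 \<bullet> x)) * ennreal (exp (y2 \<bullet> x')) \<partial>M2 \<partial>M1)"
    by (subst sigma_finite_measure.nn_integral_fst[OF is_prob_on_borel_sigma_finite[OF assms(2)], symmetric])
      simp_all
  also have "\<dots> = (\<integral>\<^sup>+x. ennreal (exp (y1 \<bullet> x)) * laplace M2 y2 \<partial>M1)"
    unfolding laplace_def by (intro nn_integral_cong nn_integral_cmult exp2)
  also have "\<dots> = laplace M1 y1 * laplace M2 y2"
    unfolding laplace_def by (rule nn_integral_multc[OF exp1])
  finally show ?thesis .
qed

lemma laplace_conv:
  assumes "is_prob_on_borel M" "is_prob_on_borel N"
  shows "laplace (conv M N) y = laplace M y * laplace N y"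
proof -
  have "laplace (conv M N) y = laplace (M \<Otimes>\<^sub>M N) (y, y)"
    unfolding conv_def
    by (subst laplace_distr[OF is_prob_on_borel_pair[OF assms] borel_measurable_add_split])
      (auto simp: laplace_def inner_add_right split_beta' intro!: nn_integral_cong)
  then show ?thesis using laplace_pair[OF assms] by simp
qed

lemma laplace_reflect: "is_prob_on_borel M \<Longrightarrow> laplace (reflect M) y = laplace M (-y)"
  unfolding reflect_def by (subst laplace_distr) (auto simp: laplace_def)

lemma laplace_symmetrization:
  "is_prob_on_borel M \<Longrightarrow> laplace (symmetrization M) y = laplace M y * laplace M (-y)"
  unfolding symmetrization_def
  by (simp add: laplace_conv laplace_reflect is_prob_on_borel_reflect)

lemma laplace_symmetrization_even:
  "is_prob_on_borel M \<Longrightarrow> laplace (symmetrization M) (-y) = laplace (symmetrization M) y"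
  by (simp add: laplace_symmetrization mult.commute)

lemma laplace_affine:
  assumes "is_prob_on_borel M" "linear A"
  shows "laplace (distr M borel (\<lambda>x. A x + c)) y = ennreal (exp (y \<bullet> c)) * laplace M (adjoint A y)"
proof -
  have "y \<bullet> (A x + c) = y \<bullet> c + adjoint A y \<bullet> x" for x
    using adjoint_works[OF assms(2), of x y] by (simp add: inner_add_right inner_commute)
  then have "laplace (distr M borel (\<lambda>x. A x + c)) y
      = (\<integral>\<^sup>+x. ennreal (exp (y \<bullet> c)) * ennreal (exp (adjoint A y \<bullet> x)) \<partial>M)"
    by (simp add: laplace_distr[OF assms(1) borel_measurable_affine[OF assms(2)]] exp_add ennreal_mult)
  also have "\<dots> = ennreal (exp (y \<bullet> c)) * laplace M (adjoint A y)"
    unfolding laplace_def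
    by (intro nn_integral_cmult measurable_is_prob_on_borelI[OF assms(1) borel_measurable_exp_inner])
  finally show ?thesis .
qed

(* Averaging L(y) and L(-y) integrates cosh (y . x), which is increasing in |y . x|. *)
lemma laplace_even_scaleR_le:
  assumes N: "is_prob_on_borel N" and even: "\<And>y. laplace N (-y) = laplace N y"
    and t: "0 \<le> t" "t \<le> 1"
  shows "laplace N (t *\<^sub>R y) \<le> laplace N y"
proof -
  have exp_N: "(\<lambda>x. ennreal (exp (y \<bullet> x))) \<in> borel_measurable N" for y
    using N by (auto intro: measurable_is_prob_on_borelI)
  have twice: "2 * laplace N y = (\<integral>\<^sup>+x. ennreal (exp (y \<bullet> x) + exp ((-y) \<bullet> x)) \<partial>N)" for y
  proof -
    have "2 * laplace N y = laplace N y + laplace N (-y)" by (simp add: even mult_2)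
    also have "\<dots> = (\<integral>\<^sup>+x. ennreal (exp (y \<bullet> x)) + ennreal (exp ((-y) \<bullet> x)) \<partial>N)"
      unfolding laplace_def by (rule nn_integral_add[symmetric]) (fact exp_N)+
    finally show ?thesis by (simp add: ennreal_plus del: ennreal_plus_if)
  qed
  have "exp (t * s) + exp (- (t * s)) \<le> exp s + exp (- s)" for s :: real
  proof -
    have "cosh \<bar>t * s\<bar> \<le> cosh \<bar>s\<bar>"
      using t by (subst cosh_real_nonneg_le_iff) (auto simp: abs_mult mult_left_le_one_le)
    then have "cosh (t * s) \<le> cosh s" by simp
    then show ?thesis by (simp add: cosh_field_def)
  qed
  then have "2 * laplace N (t *\<^sub>R y) \<le> 2 * laplace N y"
    unfolding twice by (intro nn_integral_mono ennreal_leI) simp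
  then show ?thesis by (simp add: ennreal_mult_le_mult_iff)
qed

lemma legendre_log_laplace_nonneg:
  assumes "is_prob_on_borel M" shows "0 \<le> legendre_log_laplace M x"
proof -
  have "ereal (x \<bullet> 0) - log_laplace M 0 \<le> legendre_log_laplace M x"
    unfolding legendre_log_laplace_def by (rule SUP_upper) auto
  then show ?thesis
    using laplace_zero[OF assms] by (simp add: log_laplace_eq_ln_laplace ln_ennreal_def zero_ereal_def)
qed

lemma legendre_log_laplace_scaleR_mono:
  assumes N: "is_prob_on_borel N" and even: "\<And>y. laplace N (-y) = laplace N y"
    and "0 < \<beta>'" "\<beta>' \<le> \<beta>"
  shows "legendre_log_laplace N (x /\<^sub>R \<beta>) \<le> legendre_log_laplace N (x /\<^sub>R \<beta>')"
  unfolding legendre_log_laplace_def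
proof (rule SUP_least)
  fix y
  define t where "t = \<beta>' / \<beta>"
  have "(x /\<^sub>R \<beta>) \<bullet> y = (x /\<^sub>R \<beta>') \<bullet> (t *\<^sub>R y)"
    using assms by (simp add: t_def field_simps)
  moreover have "log_laplace N (t *\<^sub>R y) \<le> log_laplace N y"
    unfolding log_laplace_eq_ln_laplace using assms
    by (intro ln_ennreal_mono laplace_nonzero laplace_even_scaleR_le) (auto simp: t_def)
  ultimately have "ereal ((x /\<^sub>R \<beta>) \<bullet> y) - log_laplace N y
      \<le> ereal ((x /\<^sub>R \<beta>') \<bullet> (t *\<^sub>R y)) - log_laplace N (t *\<^sub>R y)"
    by (intro ereal_minus_mono) auto
  also have "\<dots> \<le> (SUP y. ereal ((x /\<^sub>R \<beta>') \<bullet> y) - log_laplace N y)"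
    by (rule SUP_upper) auto
  finally show "ereal ((x /\<^sub>R \<beta>) \<bullet> y) - log_laplace N y
      \<le> (SUP y. ereal ((x /\<^sub>R \<beta>') \<bullet> y) - log_laplace N y)" .
qed

lemma legendre_log_laplace_adjoint_le:
  assumes "linear A" and log_laplace_eq: "\<And>y. log_laplace N y = log_laplace M (adjoint A y)"
  shows "legendre_log_laplace N (A x) \<le> legendre_log_laplace M x"
  unfolding legendre_log_laplace_def
proof (rule SUP_least)
  fix y
  have "ereal (A x \<bullet> y) - log_laplace N y = ereal (x \<bullet> adjoint A y) - log_laplace M (adjoint A y)"
    using adjoint_works[OF assms(1)] log_laplace_eq by simp
  also have "\<dots> \<le> (SUP y. ereal (x \<bullet> y) - log_laplace M y)"
    by (rule SUP_upper) auto
  finally show "ereal (A x \<bullet> y) - log_laplace N y \<le> (SUP y. ereal (x \<bullet> y) - log_laplace M y)" .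
qed

lemma legendre_log_laplace_Pair_le:
  assumes "is_prob_on_borel N1" "is_prob_on_borel N2"
    and log_laplace_eq: "\<And>y1 y2. log_laplace N (y1, y2) = log_laplace N1 y1 + log_laplace N2 y2"
  shows "legendre_log_laplace N (x1, x2) \<le> legendre_log_laplace N1 x1 + legendre_log_laplace N2 x2"
  unfolding legendre_log_laplace_def[of N]
proof (rule SUP_least)
  fix y :: "'a \<times> 'b"
  obtain y1 y2 where y: "y = (y1, y2)" by (cases y)
  have "ereal ((x1, x2) \<bullet> y) - log_laplace N y
      \<le> (ereal (x1 \<bullet> y1) - log_laplace N1 y1) + (ereal (x2 \<bullet> y2) - log_laplace N2 y2)"
    unfolding y log_laplace_eq using assms
    by (simp add: ereal_diff_add_le log_laplace_eq_ln_laplace ln_ennreal_def laplace_nonzero)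
  also have "\<dots> \<le> legendre_log_laplace N1 x1 + legendre_log_laplace N2 x2"
    unfolding legendre_log_laplace_def by (intro add_mono SUP_upper) auto
  finally show "ereal ((x1, x2) \<bullet> y) - log_laplace N y
      \<le> legendre_log_laplace N1 x1 + legendre_log_laplace N2 x2" .
qed

subsection \<open>Stability of property (tau)\<close>

lemma property_tauD:
  "property_tau M W \<Longrightarrow> f \<in> borel_measurable borel \<Longrightarrow> bounded (range f) \<Longrightarrow>
    (\<integral>\<^sup>+x. exp_ereal (inf_conv W f x) \<partial>M) * (\<integral>\<^sup>+x. ennreal (exp (- f x)) \<partial>M) \<le> 1"
  by (simp add: property_tau_def)

lemma property_tau_distr:
  assumes tau: "property_tau M W" and M: "sets M = sets borel" and T: "T \<in> borel_measurable borel"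
    and cost: "\<And>x z. W' (T x - T z) \<le> W (x - z)"
  shows "property_tau (distr M borel T) W'"
  unfolding property_tau_def
proof (intro allI impI)
  fix f :: "'b \<Rightarrow> real"
  assume f: "f \<in> borel_measurable borel" "bounded (range f)"
  have T_M: "T \<in> borel_measurable M" using T M by (metis measurable_cong_sets)
  have inf_conv_le: "inf_conv W' f (T x) \<le> inf_conv W (\<lambda>x. f (T x)) x" for x
    unfolding inf_conv_def
  proof (rule INF_greatest)
    fix z
    have "(INF y. W' (T x - y) + ereal (f y)) \<le> W' (T x - T z) + ereal (f (T z))"
      by (rule INF_lower) simp
    also have "\<dots> \<le> W (x - z) + ereal (f (T z))" using cost by (rule add_right_mono)
    finally show "(INF y. W' (T x - y) + ereal (f y)) \<le> W (x - z) + ereal (f (T z))" .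
  qed
  have "(\<integral>\<^sup>+x. exp_ereal (inf_conv W' f x) \<partial>distr M borel T)
      \<le> (\<integral>\<^sup>+x. exp_ereal (inf_conv W' f (T x)) \<partial>M)"
    by (rule nn_integral_distr_le[OF T_M])
  also have "\<dots> \<le> (\<integral>\<^sup>+x. exp_ereal (inf_conv W (\<lambda>x. f (T x)) x) \<partial>M)"
    by (intro nn_integral_mono exp_ereal_mono inf_conv_le)
  finally have "(\<integral>\<^sup>+x. exp_ereal (inf_conv W' f x) \<partial>distr M borel T)
      * (\<integral>\<^sup>+x. ennreal (exp (- f x)) \<partial>distr M borel T)
      \<le> (\<integral>\<^sup>+x. exp_ereal (inf_conv W (\<lambda>x. f (T x)) x) \<partial>M)
      * (\<integral>\<^sup>+x. ennreal (exp (- f (T x))) \<partial>M)"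
    using f T_M by (simp add: nn_integral_distr mult_right_mono)
  also have "\<dots> \<le> 1"
    using f T by (intro property_tauD[OF tau]) (auto intro: bounded_subset)
  finally show "(\<integral>\<^sup>+x. exp_ereal (inf_conv W' f x) \<partial>distr M borel T)
      * (\<integral>\<^sup>+x. ennreal (exp (- f x)) \<partial>distr M borel T) \<le> 1" .
qed

lemma inf_conv_Pair_le:
  assumes cost: "\<And>a b. W (a, b) \<le> W1 a + W2 b" and W1_nonneg: "\<And>a. 0 \<le> W1 a"
  shows "inf_conv W f (x1, x2) \<le> W1 (x1 - y1) + inf_conv W2 (\<lambda>y2. f (y1, y2)) x2"
proof (cases "W1 (x1 - y1)")
  case (real w)
  show ?thesis unfolding real inf_conv_def[of W2]
  proof (rule le_ereal_add_INF)
    fix y2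
    have "inf_conv W f (x1, x2) \<le> W ((x1, x2) - (y1, y2)) + ereal (f (y1, y2))"
      unfolding inf_conv_def by (rule INF_lower) simp
    also have "\<dots> \<le> (W1 (x1 - y1) + W2 (x2 - y2)) + ereal (f (y1, y2))"
      using cost by (intro add_right_mono) simp
    finally show "inf_conv W f (x1, x2) \<le> ereal w + (W2 (x2 - y2) + ereal (f (y1, y2)))"
      by (simp add: real add.assoc)
  qed
qed (use W1_nonneg[of "x1 - y1"] in auto)

lemma exp_neg_nn_integral_section:
  fixes f :: "'a::euclidean_space \<times> 'b::euclidean_space \<Rightarrow> real"
  assumes M: "is_prob_on_borel M" and f: "f \<in> borel_measurable borel" and B: "\<And>z. \<bar>f z\<bar> \<le> B"
  obtains g where "g \<in> borel_measurable borel" "\<And>y. \<bar>g y\<bar> \<le> B"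
    "\<And>y. (\<integral>\<^sup>+x. ennreal (exp (- f (y, x))) \<partial>M) = ennreal (exp (- g y))"
proof -
  define F where "F y = (\<integral>\<^sup>+x. ennreal (exp (- f (y, x))) \<partial>M)" for y
  have "sets ((borel :: 'a measure) \<Otimes>\<^sub>M M) = sets (borel \<Otimes>\<^sub>M (borel :: 'b measure))"
    using is_prob_on_borelD(2)[OF M] by (intro sets_pair_measure_cong) auto
  then have "sets ((borel :: 'a measure) \<Otimes>\<^sub>M M) = sets (borel :: ('a \<times> 'b) measure)" by (metis borel_prod)
  then have [measurable]: "f \<in> borel_measurable (borel \<Otimes>\<^sub>M M)"
    using f by (metis measurable_cong_sets)
  have F_measurable: "F \<in> borel_measurable borel" unfolding F_def
    by (rule sigma_finite_measure.borel_measurable_nn_integral[OF is_prob_on_borel_sigma_finite[OF M]])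
      simp
  have F_bounds: "ennreal (exp (- B)) \<le> F y" "F y \<le> ennreal (exp B)" for y
  proof -
    have "exp (- B) \<le> exp (- f (y, x))" "exp (- f (y, x)) \<le> exp B" for x
      using B[of "(y, x)"] by simp_all
    then have "(\<integral>\<^sup>+x. ennreal (exp (- B)) \<partial>M) \<le> F y" "F y \<le> (\<integral>\<^sup>+x. ennreal (exp B) \<partial>M)"
      unfolding F_def by (intro nn_integral_mono ennreal_leI; simp)+
    then show "ennreal (exp (- B)) \<le> F y" "F y \<le> ennreal (exp B)"
      using prob_space.emeasure_space_1[OF is_prob_on_borelD(1)[OF M]] by simp_all
  qed
  then have F_finite: "F y < \<top>" for y by (metis ennreal_less_top le_less_trans)
  have real_bounds: "exp (- B) \<le> enn2real (F y)" "enn2real (F y) \<le> exp B" for y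
    using enn2real_mono[OF F_bounds(1) F_finite] enn2real_mono[OF F_bounds(2)] by simp_all
  define g where "g y = - ln (enn2real (F y))" for y
  show ?thesis
  proof
    show "g \<in> borel_measurable borel" unfolding g_def using F_measurable by measurable
    show "\<bar>g y\<bar> \<le> B" for y
    proof -
      have "0 < enn2real (F y)" using real_bounds(1)[of y] by (metis exp_gt_zero less_le_trans)
      then have "ln (exp (- B)) \<le> ln (enn2real (F y))" "ln (enn2real (F y)) \<le> ln (exp B)"
        using real_bounds[of y] by (simp_all del: ln_exp)
      then show ?thesis by (simp add: g_def abs_le_iff)
    qed
    show "(\<integral>\<^sup>+x. ennreal (exp (- f (y, x))) \<partial>M) = ennreal (exp (- g y))" for y
      using real_bounds(1)[of y] F_finite[of y, THEN less_imp_neq]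
      by (simp add: g_def F_def[symmetric] ennreal_enn2real_if order.strict_trans2[OF exp_gt_zero])
  qed
qed

lemma nn_integral_exp_inf_conv_Pair_le:
  assumes W1_nonneg: "\<And>a. 0 \<le> W1 a" and W2_nonneg: "\<And>b. 0 \<le> W2 b"
    and cost: "\<And>a b. W (a, b) \<le> W1 a + W2 b"
    and f_lower: "\<And>z. c \<le> f z" and g_lower: "\<And>y. m \<le> g y"
    and section_bound: "\<And>y1. (\<integral>\<^sup>+x2. exp_ereal (inf_conv W2 (\<lambda>y2. f (y1, y2)) x2) \<partial>M) \<le> ennreal (exp (g y1))"
  shows "(\<integral>\<^sup>+x2. exp_ereal (inf_conv W f (x1, x2)) \<partial>M) \<le> exp_ereal (inf_conv W1 g x1)"
  unfolding inf_conv_def[of W1]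
proof (rule le_exp_ereal_INF[where m=m])
  fix y1
  define h where "h x2 = inf_conv W2 (\<lambda>y2. f (y1, y2)) x2" for x2
  have h_finite: "h x2 \<noteq> -\<infinity>" for x2
  proof -
    have "ereal c \<le> W2 (x2 - y2) + ereal (f (y1, y2))" for y2
      using f_lower[of "(y1, y2)"] W2_nonneg[of "x2 - y2"] add_mono[of 0 "W2 (x2 - y2)" "ereal c"]
      by simp
    then have "ereal c \<le> h x2" unfolding h_def inf_conv_def by (rule INF_greatest)
    then show ?thesis by auto
  qed
  show "ereal m \<le> W1 (x1 - y1) + ereal (g y1)"
    using g_lower[of y1] W1_nonneg[of "x1 - y1"] add_mono[of 0 "W1 (x1 - y1)" "ereal m"] by simp
  show "(\<integral>\<^sup>+x2. exp_ereal (inf_conv W f (x1, x2)) \<partial>M) \<le> exp_ereal (W1 (x1 - y1) + ereal (g y1))"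
  proof (cases "W1 (x1 - y1) = \<infinity>")
    case False
    then have finite: "exp_ereal (W1 (x1 - y1)) < \<top>"
      using W1_nonneg[of "x1 - y1"] by (cases "W1 (x1 - y1)") (auto simp: exp_ereal_def)
    have "(\<integral>\<^sup>+x2. exp_ereal (inf_conv W f (x1, x2)) \<partial>M)
        \<le> (\<integral>\<^sup>+x2. exp_ereal (W1 (x1 - y1)) * exp_ereal (h x2) \<partial>M)"
    proof (rule nn_integral_mono)
      fix x2
      have "exp_ereal (inf_conv W f (x1, x2)) \<le> exp_ereal (W1 (x1 - y1) + h x2)"
        unfolding h_def by (intro exp_ereal_mono inf_conv_Pair_le cost W1_nonneg)
      also have "\<dots> = exp_ereal (W1 (x1 - y1)) * exp_ereal (h x2)"
        using h_finite by (intro exp_ereal_add W1_nonneg)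
      finally show "exp_ereal (inf_conv W f (x1, x2)) \<le> exp_ereal (W1 (x1 - y1)) * exp_ereal (h x2)" .
    qed
    also have "\<dots> \<le> exp_ereal (W1 (x1 - y1)) * ennreal (exp (g y1))"
      using nn_integral_cmult_le[OF finite, where M=M and g="\<lambda>x2. exp_ereal (h x2)"]
        mult_left_mono[OF section_bound[of y1]]
      unfolding h_def by (meson order_trans zero_le)
    also have "\<dots> = exp_ereal (W1 (x1 - y1) + ereal (g y1))"
      using W1_nonneg[of "x1 - y1"] by (subst exp_ereal_add) (auto simp: exp_ereal_def)
    finally show ?thesis .
  qed (simp add: exp_ereal_def)
qed

(* Tensorization: integrate out the second coordinate using (tau) for M2, then apply (tau) for M1
   to the potential g with exp (- g y1) = \<integral> exp (- f (y1, .)) dM2. *)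
lemma property_tau_pair:
  assumes M1: "is_prob_on_borel M1" and M2: "is_prob_on_borel M2"
    and tau1: "property_tau M1 W1" and tau2: "property_tau M2 W2"
    and W1_nonneg: "\<And>a. 0 \<le> W1 a" and W2_nonneg: "\<And>b. 0 \<le> W2 b"
    and cost: "\<And>a b. W (a, b) \<le> W1 a + W2 b"
  shows "property_tau (M1 \<Otimes>\<^sub>M M2) W"
  unfolding property_tau_def
proof (intro allI impI)
  fix f :: "'a \<times> 'b \<Rightarrow> real"
  assume f: "f \<in> borel_measurable borel" "bounded (range f)"
  then obtain B where B: "\<And>z. \<bar>f z\<bar> \<le> B" unfolding bounded_real by auto
  obtain g where g: "g \<in> borel_measurable borel" "\<And>y. \<bar>g y\<bar> \<le> B"
    and g_eq: "\<And>y. (\<integral>\<^sup>+x. ennreal (exp (- f (y, x))) \<partial>M2) = ennreal (exp (- g y))"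
    using exp_neg_nn_integral_section[OF M2 f(1) B] by blast
  have section_bound: "(\<integral>\<^sup>+x2. exp_ereal (inf_conv W2 (\<lambda>y2. f (y1, y2)) x2) \<partial>M2) \<le> ennreal (exp (g y1))"
    for y1
  proof -
    have "(\<lambda>y2. f (y1, y2)) \<in> borel_measurable borel" using f(1) by measurable
    moreover have "bounded (range (\<lambda>y2. f (y1, y2)))" using f(2) by (rule bounded_subset) auto
    ultimately have "(\<integral>\<^sup>+x2. exp_ereal (inf_conv W2 (\<lambda>y2. f (y1, y2)) x2) \<partial>M2)
        * ennreal (exp (- g y1)) \<le> 1"
      using property_tauD[OF tau2] g_eq by metis
    then have "(\<integral>\<^sup>+x2. exp_ereal (inf_conv W2 (\<lambda>y2. f (y1, y2)) x2) \<partial>M2)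
        * (ennreal (exp (- g y1)) * ennreal (exp (g y1))) \<le> ennreal (exp (g y1))"
      by (metis mult.assoc mult_right_mono mult_1 zero_le)
    then show ?thesis by (simp add: ennreal_mult[symmetric] exp_minus)
  qed
  have sigma_M2: "sigma_finite_measure M2" by (rule is_prob_on_borel_sigma_finite[OF M2])
  have [measurable]: "f \<in> borel_measurable (M1 \<Otimes>\<^sub>M M2)"
    using f(1) is_prob_on_borelD(2)[OF is_prob_on_borel_pair[OF M1 M2]] by (metis measurable_cong_sets)
  have "(\<integral>\<^sup>+z. exp_ereal (inf_conv W f z) \<partial>(M1 \<Otimes>\<^sub>M M2))
      \<le> (\<integral>\<^sup>+x1. \<integral>\<^sup>+x2. exp_ereal (inf_conv W f (x1, x2)) \<partial>M2 \<partial>M1)"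
    by (rule sigma_finite_measure.nn_integral_fst_le[OF sigma_M2])
  also have "\<dots> \<le> (\<integral>\<^sup>+x1. exp_ereal (inf_conv W1 g x1) \<partial>M1)"
  proof (rule nn_integral_mono)
    fix x1
    have "- B \<le> f z" "- B \<le> g y" for z y using B[of z] g(2)[of y] by linarith+
    then show "(\<integral>\<^sup>+x2. exp_ereal (inf_conv W f (x1, x2)) \<partial>M2) \<le> exp_ereal (inf_conv W1 g x1)"
      by (intro nn_integral_exp_inf_conv_Pair_le[OF W1_nonneg W2_nonneg cost _ _ section_bound])
  qed
  finally have "(\<integral>\<^sup>+z. exp_ereal (inf_conv W f z) \<partial>(M1 \<Otimes>\<^sub>M M2))
      * (\<integral>\<^sup>+z. ennreal (exp (- f z)) \<partial>(M1 \<Otimes>\<^sub>M M2))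
      \<le> (\<integral>\<^sup>+x1. exp_ereal (inf_conv W1 g x1) \<partial>M1) * (\<integral>\<^sup>+x1. ennreal (exp (- g x1)) \<partial>M1)"
    by (simp add: sigma_finite_measure.nn_integral_fst[OF sigma_M2, symmetric] g_eq mult_right_mono)
  also have "\<dots> \<le> 1"
    using g by (intro property_tauD[OF tau1]) (auto simp: bounded_real)
  finally show "(\<integral>\<^sup>+z. exp_ereal (inf_conv W f z) \<partial>(M1 \<Otimes>\<^sub>M M2))
      * (\<integral>\<^sup>+z. ennreal (exp (- f z)) \<partial>(M1 \<Otimes>\<^sub>M M2)) \<le> 1" .
qed

definition IC_cost :: "'a::euclidean_space measure \<Rightarrow> real \<Rightarrow> 'a \<Rightarrow> ereal" where
  "IC_cost M \<beta> x = legendre_log_laplace (symmetrization M) (x /\<^sub>R \<beta>)"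

lemma IC_iff_property_tau: "IC \<beta> M \<longleftrightarrow> property_tau M (IC_cost M \<beta>)"
  by (simp add: IC_def IC_cost_def[abs_def])

lemma IC_cost_nonneg: "is_prob_on_borel M \<Longrightarrow> 0 \<le> IC_cost M \<beta> x"
  unfolding IC_cost_def by (intro legendre_log_laplace_nonneg is_prob_on_borel_symmetrization)

lemma IC_cost_antimono:
  "is_prob_on_borel M \<Longrightarrow> 0 < \<beta>' \<Longrightarrow> \<beta>' \<le> \<beta> \<Longrightarrow> IC_cost M \<beta> x \<le> IC_cost M \<beta>' x"
  unfolding IC_cost_def
  by (intro legendre_log_laplace_scaleR_mono is_prob_on_borel_symmetrization laplace_symmetrization_even)

lemma IC_cost_affine_le:
  assumes M: "is_prob_on_borel M" and A: "linear A"
  shows "IC_cost (distr M borel (\<lambda>x. A x + c)) \<beta> (A z) \<le> IC_cost M \<beta> z"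
proof -
  let ?N = "distr M borel (\<lambda>x. A x + c)"
  have N: "is_prob_on_borel ?N" by (rule is_prob_on_borel_distr[OF M borel_measurable_affine[OF A]])
  have "laplace (symmetrization ?N) y = laplace (symmetrization M) (adjoint A y)" for y
  proof -
    have "ennreal (exp (y \<bullet> c)) * ennreal (exp ((-y) \<bullet> c)) = 1"
      by (simp add: ennreal_mult[symmetric] exp_minus)
    moreover have "adjoint A (-y) = - adjoint A y" by (rule linear_neg[OF adjoint_linear[OF A]])
    moreover have "laplace (symmetrization ?N) y
        = (ennreal (exp (y \<bullet> c)) * ennreal (exp ((-y) \<bullet> c)))
          * (laplace M (adjoint A y) * laplace M (adjoint A (-y)))"
      unfolding laplace_symmetrization[OF N] laplace_affine[OF M A] by (simp only: mult_ac)
    ultimately show ?thesis by (simp add: laplace_symmetrization[OF M])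
  qed
  moreover have "A z /\<^sub>R \<beta> = A (z /\<^sub>R \<beta>)" by (simp add: linear_scale[OF A])
  ultimately show ?thesis
    unfolding IC_cost_def
    by (metis A legendre_log_laplace_adjoint_le log_laplace_eq_ln_laplace)
qed

lemma IC_cost_pair_le:
  assumes M1: "is_prob_on_borel M1" and M2: "is_prob_on_borel M2" and "0 < \<beta>1" "0 < \<beta>2"
  shows "IC_cost (M1 \<Otimes>\<^sub>M M2) (max \<beta>1 \<beta>2) (a, b) \<le> IC_cost M1 \<beta>1 a + IC_cost M2 \<beta>2 b"
proof -
  have "log_laplace (symmetrization (M1 \<Otimes>\<^sub>M M2)) (y1, y2)
      = log_laplace (symmetrization M1) y1 + log_laplace (symmetrization M2) y2" for y1 y2
    using M1 M2 is_prob_on_borel_pair[OF M1 M2]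
    by (simp add: log_laplace_eq_ln_laplace laplace_symmetrization laplace_pair ac_simps
        ln_ennreal_mult[symmetric] laplace_nonzero)
  then have "IC_cost (M1 \<Otimes>\<^sub>M M2) (max \<beta>1 \<beta>2) (a, b)
      \<le> IC_cost M1 (max \<beta>1 \<beta>2) a + IC_cost M2 (max \<beta>1 \<beta>2) b"
    unfolding IC_cost_def using M1 M2
    by (simp add: legendre_log_laplace_Pair_le is_prob_on_borel_symmetrization)
  also have "\<dots> \<le> IC_cost M1 \<beta>1 a + IC_cost M2 \<beta>2 b"
    using assms by (intro add_mono IC_cost_antimono) auto
  finally show ?thesis .
qed

lemma IC_affine:
  assumes M: "is_prob_on_borel M" and "IC \<beta> M" and A: "linear A"
  shows "IC \<beta> (distr M borel (\<lambda>x. A x + c))"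
proof -
  have "A x + c - (A z + c) = A (x - z)" for x z by (simp add: linear_diff[OF A])
  then show ?thesis
    using assms is_prob_on_borelD(2)[OF M] borel_measurable_affine[OF A]
    by (auto simp: IC_iff_property_tau intro!: property_tau_distr IC_cost_affine_le)
qed

lemma IC_pair:
  assumes "is_prob_on_borel M1" "0 < \<beta>1" "IC \<beta>1 M1"
    and "is_prob_on_borel M2" "0 < \<beta>2" "IC \<beta>2 M2"
  shows "IC (max \<beta>1 \<beta>2) (M1 \<Otimes>\<^sub>M M2)"
  using assms unfolding IC_iff_property_tau
  by (auto intro!: property_tau_pair IC_cost_nonneg IC_cost_pair_le)

lemma IC_conv:
  assumes "is_prob_on_borel M1" "0 < \<beta>1" "IC \<beta>1 M1"
    and "is_prob_on_borel M2" "0 < \<beta>2" "IC \<beta>2 M2"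
  shows "IC (max \<beta>1 \<beta>2) (conv M1 M2)"
proof -
  have "linear (\<lambda>z :: 'a \<times> 'a. fst z + snd z)" by (intro linear_compose_add linear_fst linear_snd)
  then have "IC (max \<beta>1 \<beta>2) (distr (M1 \<Otimes>\<^sub>M M2) borel (\<lambda>z. (fst z + snd z) + 0))"
    using assms by (intro IC_affine IC_pair is_prob_on_borel_pair)
  then show ?thesis by (simp add: conv_def case_prod_unfold)
qed

lemma IC_symmetrization:
  assumes "is_prob_on_borel M" "0 < \<beta>" "IC \<beta> M"
  shows "IC \<beta> (symmetrization M)"
proof -
  have "IC \<beta> (distr M borel (\<lambda>x. - x + 0))"
    using assms by (intro IC_affine linear_uminus)
  then have "IC \<beta> (reflect M)" by (simp add: reflect_def)
  from IC_conv[OF assms is_prob_on_borel_reflect[OF assms(1)] assms(2) this] show ?thesis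
    by (simp add: symmetrization_def)
qed

theorem proposition8:
  fixes M :: "'a::euclidean_space measure" and L :: "'a \<Rightarrow> 'b::euclidean_space"
    and M1 :: "'c::euclidean_space measure" and M2 :: "'d::euclidean_space measure"
    and N1 N2 :: "'e::euclidean_space measure"
    and \<beta> \<beta>1 \<beta>2 \<gamma>1 \<gamma>2 :: real
  assumes "is_prob_on_borel M" "\<beta> > 0" "IC \<beta> M"
    and "is_prob_on_borel M1" "\<beta>1 > 0" "IC \<beta>1 M1"
    and "is_prob_on_borel M2" "\<beta>2 > 0" "IC \<beta>2 M2"
    and "is_prob_on_borel N1" "\<gamma>1 > 0" "IC \<gamma>1 N1"
    and "is_prob_on_borel N2" "\<gamma>2 > 0" "IC \<gamma>2 N2"
  shows "((\<exists>A c. linear A \<and> (\<forall>x. L x = A x + c)) \<longrightarrow> IC \<beta> (distr M borel L))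
       \<and> IC (max \<beta>1 \<beta>2) (M1 \<Otimes>\<^sub>M M2)
       \<and> IC (max \<gamma>1 \<gamma>2) (conv N1 N2)
       \<and> IC \<beta> (symmetrization M)"
proof (intro conjI impI)
  assume "\<exists>A c. linear A \<and> (\<forall>x. L x = A x + c)"
  then obtain A c where "linear A" "L = (\<lambda>x. A x + c)" by auto
  then show "IC \<beta> (distr M borel L)" using IC_affine assms(1,3) by blast
qed (use assms IC_pair IC_conv IC_symmetrization in blast)+

end
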